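(* Let $n\ge5$, $x\in\mathcal{H}_n$ and $p_0<p_1<\dots<p_{n-4}$. Then any two chain covers for $x$ are connected to each other in $\tilde{\mathbb{H}}_1(x,p)$, i.e. the corresponding vertices of the tropical curve $\tilde{\mathbb{H}}_1(x,p)$ can be joined by a sequence of edges of $\tilde{\mathbb{H}}_1(x,p)$.
   Context: $\mathcal{H}_n:=\{x\in\mathbb{Z}^n:\sum_i x_i=0\}\setminus\{0\}$. $\tilde{\mathbb{H}}_1(x,p)$ is the one-dimensional marked tropical Hurwitz cycle, $\tilde{\mathbb{H}}_1(x,p)=\prod_{i=0}^{n-4}(\Psi_i\cdot\mathrm{ev}_i^*(p_i))\cdot\mathcal{M}_{0,n-3}(\mathbb{R},x)$, where $\mathcal{M}_{0,m}(\mathbb{R},x)=\mathcal{M}_{0,n+m}\times\mathbb{R}$ is the space of tropical stable maps of rational $n$-marked curves with $m$ additional contracted leaves $l_0,\dots,l_{m-1}$ to $\mathbb{R}$ with slopes $x_i$ on leaf $i$, $\mathrm{ev}_i$ is evaluation at $l_i$, $\Psi_i$ is the Psi class of $l_i$ (curves where $l_i$ sits at a vertex of valence $\ge4$) times $\mathbb{R}$, and $\mathrm{ev}_i^*(p_i)$ is the pull-back of $t\mapsto\max\{t,p_i\}$. Orientation/weights: for an $n$-marked rational tropical curve, leaf $i$ has weight $|x_i|$ and points away from its vertex iff $x_i>0$; a bounded edge inducing the split $I\mid I^c$ has weight $|\sum_{i\in I}x_i|$ and points towards $I$ iff $\sum_{i\in I}x_i>0$. A vertex type cover is a combinatorial type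 of an $n$-marked rational curve with exactly one four-valent vertex and all other vertices trivalent, together with a bijective labeling of its $n-3$ vertices by $p_0,\dots,p_{n-4}$, such that every bounded edge has nonzero weight and is oriented from the vertex with the smaller label to the vertex with the larger label; these are exactly the vertices of $\tilde{\mathbb{H}}_1(x,p)$ (the $p_j$ determine all edge lengths). A chain cover is a vertex type cover in which the vertices carrying $p_i$ and $p_j$ are adjacent iff $|i-j|=1$. *)

theory Defs
  imports Complex_Main
begin

text \<open>A type is a pair (E, lf): E is the set of bounded edges (two-element sets of
  internal vertices, internal vertices are natural numbers), and lf is a list of
  length n, leaf i being attached to the internal vertex lf ! i.
  For vertex type covers the internal vertices are 0..n-4 and vertex j carries p_j.
  For the one-dimensional cells of the Hurwitz cycle the internal vertices are
  0..n-3, where n-3 is the (unique) vertex not carrying a point condition.\<close>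

type_synonym ctype = "nat set set \<times> nat list"

definition adjrel :: "nat set set \<Rightarrow> (nat \<times> nat) set" where
  "adjrel E = {(a, b). {a, b} \<in> E}"

definition is_tree :: "nat set \<Rightarrow> nat set set \<Rightarrow> bool" where
  "is_tree V E \<longleftrightarrow> finite V \<and> V \<noteq> {} \<and>
     (\<forall>e\<in>E. \<exists>a b. e = {a, b} \<and> a \<noteq> b \<and> a \<in> V \<and> b \<in> V) \<and>
     (\<forall>a\<in>V. \<forall>b\<in>V. (a, b) \<in> (adjrel E)\<^sup>*) \<and>
     card E + 1 = card V"

definition val :: "ctype \<Rightarrow> nat \<Rightarrow> nat" where
  "val T u = card {e \<in> fst T. u \<in> e} + card {i. i < length (snd T) \<and> snd T ! i = u}"

definition ntype :: "nat \<Rightarrow> nat set \<Rightarrow> ctype \<Rightarrow> bool" where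
  "ntype n V T \<longleftrightarrow> is_tree V (fst T) \<and> length (snd T) = n \<and>
     (\<forall>i<n. snd T ! i \<in> V) \<and> (\<forall>u\<in>V. 3 \<le> val T u)"

text \<open>The leaves on the b-side of the bounded edge {a,b}, and the signed sum of
  the x_i over them; the edge has weight |flow| and points towards b iff flow > 0.\<close>
definition side :: "ctype \<Rightarrow> nat \<Rightarrow> nat \<Rightarrow> nat set" where
  "side T a b = {i. i < length (snd T) \<and> (b, snd T ! i) \<in> (adjrel (fst T - {{a, b}}))\<^sup>*}"

definition flow :: "(nat \<Rightarrow> int) \<Rightarrow> ctype \<Rightarrow> nat \<Rightarrow> nat \<Rightarrow> int" where
  "flow x T a b = (\<Sum>i\<in>side T a b. x i)"

definition in_Hn :: "nat \<Rightarrow> (nat \<Rightarrow> int) \<Rightarrow> bool" where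
  "in_Hn n x \<longleftrightarrow> (\<Sum>i<n. x i) = 0 \<and> (\<exists>i<n. x i \<noteq> 0)"

definition vertex_type_cover :: "nat \<Rightarrow> (nat \<Rightarrow> int) \<Rightarrow> ctype \<Rightarrow> bool" where
  "vertex_type_cover n x T \<longleftrightarrow> ntype n {..<n-3} T \<and>
     (\<exists>u<n-3. val T u = 4 \<and> (\<forall>w<n-3. w \<noteq> u \<longrightarrow> val T w = 3)) \<and>
     (\<forall>a b. {a, b} \<in> fst T \<and> a < b \<longrightarrow> flow x T a b > 0)"

definition chain_cover :: "nat \<Rightarrow> (nat \<Rightarrow> int) \<Rightarrow> ctype \<Rightarrow> bool" where
  "chain_cover n x T \<longleftrightarrow> vertex_type_cover n x T \<and>
     (\<forall>i<n-3. \<forall>j<n-3. {i, j} \<in> fst T \<longleftrightarrow> (i + 1 = j \<or> j + 1 = i))"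

text \<open>Bounded one-dimensional cells (edges) of the marked Hurwitz cycle: trivalent
  n-marked types on internal vertices 0..n-3, vertex j < n-3 carrying p_j and the vertex
  v = n-3 free. Every bounded edge has nonzero weight, edges between marked vertices point
  towards the larger p-value, and the position t of v ranges over the nonempty bounded
  interval given by  p_a < t  for edges a -> v  and  t < p_b  for edges v -> b.\<close>
definition in_nb :: "(nat \<Rightarrow> int) \<Rightarrow> nat \<Rightarrow> ctype \<Rightarrow> nat set" where
  "in_nb x n T = {a. {a, n-3} \<in> fst T \<and> flow x T a (n-3) > 0}"

definition out_nb :: "(nat \<Rightarrow> int) \<Rightarrow> nat \<Rightarrow> ctype \<Rightarrow> nat set" where
  "out_nb x n T = {b. {b, n-3} \<in> fst T \<and> flow x T (n-3) b > 0}"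

definition edge_cell :: "nat \<Rightarrow> (nat \<Rightarrow> int) \<Rightarrow> (nat \<Rightarrow> real) \<Rightarrow> ctype \<Rightarrow> bool" where
  "edge_cell n x p T \<longleftrightarrow> ntype n {..n-3} T \<and> (\<forall>u\<le>n-3. val T u = 3) \<and>
     (\<forall>a b. {a, b} \<in> fst T \<longrightarrow> flow x T a b \<noteq> 0) \<and>
     (\<forall>a b. {a, b} \<in> fst T \<and> a < n-3 \<and> b < n-3 \<and> p a < p b \<longrightarrow> flow x T a b > 0) \<and>
     in_nb x n T \<noteq> {} \<and> out_nb x n T \<noteq> {} \<and>
     (\<forall>a\<in>in_nb x n T. \<forall>b\<in>out_nb x n T. p a < p b)"

definition contract :: "nat \<Rightarrow> ctype \<Rightarrow> nat \<Rightarrow> ctype" where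
  "contract n T a = (let f = (\<lambda>u. if u = n-3 then a else u) in
     ((\<lambda>e. f ` e) ` (fst T - {{a, n-3}}), map f (snd T)))"

text \<open>Two vertices of the Hurwitz cycle joined by an edge: the two endpoints of a
  bounded cell, obtained by moving v down to the largest p_a (a -> v) or up to the
  smallest p_b (v -> b).\<close>
definition hur_edge :: "nat \<Rightarrow> (nat \<Rightarrow> int) \<Rightarrow> (nat \<Rightarrow> real) \<Rightarrow> (ctype \<times> ctype) set" where
  "hur_edge n x p = {(C1, C2). \<exists>T a b. edge_cell n x p T \<and>
     a \<in> in_nb x n T \<and> (\<forall>a'\<in>in_nb x n T. p a' \<le> p a) \<and>
     b \<in> out_nb x n T \<and> (\<forall>b'\<in>out_nb x n T. p b \<le> p b') \<and>
     C1 = contract n T a \<and> C2 = contract n T b}"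

end

theory Submission
  imports Defs
begin

text \<open>A chain cover is determined by the vertex of the path p_0 - p_1 - ... - p_(n-4) at which
  each leaf sits, subject to the valence conditions and to positivity of the flows. If moving a
  single leaf between the four-valent vertex and a neighbouring vertex turns one chain cover into
  another, the two are the endpoints of a bounded edge of the Hurwitz cycle: on that edge the leaf
  sits at the free vertex, which slides between the two marked points. Moving up the leaf with the
  largest x_i, or moving down the one with the smallest x_i, always produces a chain cover again.
  Ordering the leaves by (x_i, i), such moves never create inversions, and an inversion between
  neighbouring vertices is removed after first walking the four-valent vertex there. Hence every
  chain cover is joined to a sorted one with four-valent vertex p_0, and there is only one of those.\<close>

section \<open>Paths\<close>

definition path_edges :: "(nat \<Rightarrow> nat) \<Rightarrow> nat \<Rightarrow> nat set set" where
  "path_edges w N = (\<lambda>i. {w i, w (Suc i)}) ` {..<N}"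

definition path_degree :: "nat \<Rightarrow> nat \<Rightarrow> nat" where
  "path_degree N j = (if 0 < j then 1 else 0) + (if j < N then 1 else 0)"

lemma path_edge_eq_iff:
  assumes "inj_on w {..N}" "i < N" "j < N"
  shows "{w i, w (Suc i)} = {w j, w (Suc j)} \<longleftrightarrow> i = j"
proof
  assume "{w i, w (Suc i)} = {w j, w (Suc j)}"
  then have "i = j \<or> i = Suc j \<and> Suc i = j"
    using assms by (auto simp: doubleton_eq_iff inj_on_eq_iff)
  then show "i = j" by arith
qed simp

lemma inj_on_path_edge:
  "inj_on w {..N} \<Longrightarrow> inj_on (\<lambda>i. {w i, w (Suc i)}) {..<N}"
  by (auto intro: inj_onI simp: path_edge_eq_iff)

lemma rtrancl_adjrel_path_interval:
  assumes "a \<le> b" "{a..<b} \<subseteq> I"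
  shows "(w a, w b) \<in> (adjrel ((\<lambda>i. {w i, w (Suc i)}) ` I))\<^sup>* \<and>
    (w b, w a) \<in> (adjrel ((\<lambda>i. {w i, w (Suc i)}) ` I))\<^sup>*"
  using assms
proof (induction b rule: dec_induct)
  case (step b)
  then have "(w b, w (Suc b)) \<in> adjrel ((\<lambda>i. {w i, w (Suc i)}) ` I)"
    "(w (Suc b), w b) \<in> adjrel ((\<lambda>i. {w i, w (Suc i)}) ` I)"
    by (auto simp: adjrel_def insert_commute)
  moreover have "(w a, w b) \<in> (adjrel ((\<lambda>i. {w i, w (Suc i)}) ` I))\<^sup>* \<and>
      (w b, w a) \<in> (adjrel ((\<lambda>i. {w i, w (Suc i)}) ` I))\<^sup>*"
    using step by force
  ultimately show ?case by (meson rtrancl_into_rtrancl converse_rtrancl_into_rtrancl)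
qed simp

lemma rtrancl_adjrel_path:
  assumes inj: "inj_on w {..N}" and I: "I \<subseteq> {..<N}" and a: "a \<le> N"
  shows "(w a, u) \<in> (adjrel ((\<lambda>i. {w i, w (Suc i)}) ` I))\<^sup>* \<longleftrightarrow>
    (\<exists>b\<le>N. u = w b \<and> {min a b..<max a b} \<subseteq> I)"
proof
  assume "(w a, u) \<in> (adjrel ((\<lambda>i. {w i, w (Suc i)}) ` I))\<^sup>*"
  then show "\<exists>b\<le>N. u = w b \<and> {min a b..<max a b} \<subseteq> I"
  proof (induction rule: rtrancl_induct)
    case base
    show ?case using a by auto
  next
    case (step y z)
    from step.IH obtain b where b: "b \<le> N" "y = w b" "{min a b..<max a b} \<subseteq> I" by blast
    from step.hyps(2) obtain l where l: "l \<in> I" "{y, z} = {w l, w (Suc l)}"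
      by (auto simp: adjrel_def)
    have "l < N" using l I by auto
    have intervals: "{min a (Suc l)..<max a (Suc l)} \<subseteq> insert l {min a l..<max a l}"
      "{min a l..<max a l} \<subseteq> insert l {min a (Suc l)..<max a (Suc l)}"
      by auto
    have "b = l \<and> z = w (Suc l) \<or> b = Suc l \<and> z = w l"
      using l b \<open>l < N\<close> inj by (auto simp: doubleton_eq_iff inj_on_eq_iff)
    then show ?case
    proof
      assume "b = l \<and> z = w (Suc l)"
      then show ?thesis using b l \<open>l < N\<close>
        by (intro exI[of _ "Suc l"]) (use intervals in auto)
    next
      assume "b = Suc l \<and> z = w l"
      then show ?thesis using b l
        by (intro exI[of _ l]) (use intervals in auto)
    qed
  qed
next
  assume "\<exists>b\<le>N. u = w b \<and> {min a b..<max a b} \<subseteq> I"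
  then obtain b where "u = w b" "{min a b..<max a b} \<subseteq> I" by blast
  then show "(w a, u) \<in> (adjrel ((\<lambda>i. {w i, w (Suc i)}) ` I))\<^sup>*"
    using rtrancl_adjrel_path_interval[of a b I w] rtrancl_adjrel_path_interval[of b a I w]
    by (cases "a \<le> b") auto
qed

lemma is_tree_path_edges:
  assumes inj: "inj_on w {..N}"
  shows "is_tree (w ` {..N}) (path_edges w N)"
  unfolding is_tree_def
proof (intro conjI ballI)
  fix e assume "e \<in> path_edges w N"
  then obtain i where "i < N" "e = {w i, w (Suc i)}" by (auto simp: path_edges_def)
  moreover have "w i \<noteq> w (Suc i)" if "i < N" for i
    using inj that by (auto simp: inj_on_eq_iff)
  ultimately show "\<exists>a b. e = {a, b} \<and> a \<noteq> b \<and> a \<in> w ` {..N} \<and> b \<in> w ` {..N}"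
    by (intro exI[of _ "w i"] exI[of _ "w (Suc i)"]) auto
next
  fix u v assume "u \<in> w ` {..N}" "v \<in> w ` {..N}"
  then obtain a b where "a \<le> N" "b \<le> N" "u = w a" "v = w b" by auto
  moreover have "{min a b..<max a b} \<subseteq> {..<N}" using \<open>a \<le> N\<close> \<open>b \<le> N\<close> by auto
  ultimately show "(u, v) \<in> (adjrel (path_edges w N))\<^sup>*"
    unfolding path_edges_def using rtrancl_adjrel_path[OF inj order_refl, of a] by blast
next
  show "card (path_edges w N) + 1 = card (w ` {..N})"
    using card_image[OF inj] card_image[OF inj_on_path_edge[OF inj]] by (simp add: path_edges_def)
qed simp_all

lemma card_path_edges_at:
  assumes inj: "inj_on w {..N}" and j: "j \<le> N"
  shows "card {e \<in> path_edges w N. w j \<in> e} = path_degree N j"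
proof -
  have "w j \<in> {w i, w (Suc i)} \<longleftrightarrow> i = j \<or> Suc i = j" if "i < N" for i
    using inj that j by (auto simp: inj_on_eq_iff)
  then have "{e \<in> path_edges w N. w j \<in> e} =
      (\<lambda>i. {w i, w (Suc i)}) ` {i. i < N \<and> (i = j \<or> Suc i = j)}"
    unfolding path_edges_def by auto
  then have "card {e \<in> path_edges w N. w j \<in> e} = card {i. i < N \<and> (i = j \<or> Suc i = j)}"
    by (auto intro: card_image inj_on_subset[OF inj_on_path_edge[OF inj]])
  also have "{i. i < N \<and> (i = j \<or> Suc i = j)} =
      (if 0 < j then {j - 1} else {}) \<union> (if j < N then {j} else {})"
    using j by auto
  finally show ?thesis by (simp add: path_degree_def)
qed

lemma side_path_edges:
  assumes inj: "inj_on w {..N}" and i: "i < N"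
    and q: "\<forall>l<length L. q l \<le> N \<and> L!l = w (q l)"
  shows "side (path_edges w N, L) (w i) (w (Suc i)) = {l. l < length L \<and> i < q l}"
    and "side (path_edges w N, L) (w (Suc i)) (w i) = {l. l < length L \<and> q l \<le> i}"
proof -
  have cut: "path_edges w N - {{w i, w (Suc i)}} = (\<lambda>i. {w i, w (Suc i)}) ` ({..<N} - {i})"
    unfolding path_edges_def using i
    by (subst inj_on_image_set_diff[OF inj_on_path_edge[OF inj]]) auto
  have reach: "(w a, L!l) \<in> (adjrel (path_edges w N - {{w i, w (Suc i)}}))\<^sup>* \<longleftrightarrow>
      i \<notin> {min a (q l)..<max a (q l)}" if l: "l < length L" and a: "a \<le> N" for a l
  proof -
    have ql: "L!l = w (q l)" "q l \<le> N" using q l by auto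
    have "(w a, L!l) \<in> (adjrel (path_edges w N - {{w i, w (Suc i)}}))\<^sup>* \<longleftrightarrow>
        (\<exists>b\<le>N. w (q l) = w b \<and> {min a b..<max a b} \<subseteq> {..<N} - {i})"
      unfolding cut ql by (rule rtrancl_adjrel_path[OF inj _ a]) auto
    also have "\<dots> \<longleftrightarrow> {min a (q l)..<max a (q l)} \<subseteq> {..<N} - {i}"
      using inj ql by (auto simp: inj_on_eq_iff)
    also have "\<dots> \<longleftrightarrow> i \<notin> {min a (q l)..<max a (q l)}"
      using ql a by auto
    finally show ?thesis .
  qed
  show "side (path_edges w N, L) (w i) (w (Suc i)) = {l. l < length L \<and> i < q l}"
    using reach[of _ "Suc i"] i unfolding side_def by auto
  show "side (path_edges w N, L) (w (Suc i)) (w i) = {l. l < length L \<and> q l \<le> i}"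
    using reach[of _ i] i unfolding side_def by (auto simp: insert_commute)
qed

lemma flow_path_edges:
  assumes inj: "inj_on w {..N}" and i: "i < N"
    and q: "\<forall>l<length L. q l \<le> N \<and> L!l = w (q l)"
    and x: "(\<Sum>l<length L. x l) = 0"
  shows "flow x (path_edges w N, L) (w i) (w (Suc i)) = (\<Sum>l | l < length L \<and> i < q l. x l)"
    and "flow x (path_edges w N, L) (w (Suc i)) (w i) = - (\<Sum>l | l < length L \<and> i < q l. x l)"
proof -
  show "flow x (path_edges w N, L) (w i) (w (Suc i)) = (\<Sum>l | l < length L \<and> i < q l. x l)"
    unfolding flow_def side_path_edges(1)[OF inj i q] ..
  have "{l. l < length L \<and> q l \<le> i} = {..<length L} - {l. l < length L \<and> i < q l}" by auto
  then have "(\<Sum>l | l < length L \<and> q l \<le> i. x l) =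
      (\<Sum>l<length L. x l) - (\<Sum>l | l < length L \<and> i < q l. x l)"
    by (simp add: sum_diff[of "{..<length L}"] subset_eq)
  then show "flow x (path_edges w N, L) (w (Suc i)) (w i) = - (\<Sum>l | l < length L \<and> i < q l. x l)"
    unfolding flow_def side_path_edges(2)[OF inj i q] using x by simp
qed

section \<open>Chain covers as leaf lists\<close>

lemma chain_cover_edges:
  assumes "chain_cover n x (E, L)"
  shows "E = path_edges (\<lambda>i. i) (n - 4)"
proof
  have tree: "is_tree {..<n - 3} E"
    and ch: "\<forall>i<n - 3. \<forall>j<n - 3. {i, j} \<in> E \<longleftrightarrow> i + 1 = j \<or> j + 1 = i"
    using assms unfolding chain_cover_def vertex_type_cover_def ntype_def by auto
  show "E \<subseteq> path_edges (\<lambda>i. i) (n - 4)"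
  proof
    fix e assume "e \<in> E"
    then obtain a b where ab: "e = {a, b}" "a < n - 3" "b < n - 3"
      using tree unfolding is_tree_def lessThan_iff by blast
    then have "a + 1 = b \<or> b + 1 = a" using ch \<open>e \<in> E\<close> by blast
    then obtain i where "i < n - 4" "e = {i, Suc i}"
    proof
      assume "a + 1 = b"
      then show thesis using ab that[of a] by simp
    next
      assume "b + 1 = a"
      then show thesis using ab that[of b] by (simp add: insert_commute)
    qed
    then show "e \<in> path_edges (\<lambda>i. i) (n - 4)" by (auto simp: path_edges_def)
  qed
  show "path_edges (\<lambda>i. i) (n - 4) \<subseteq> E" using ch by (auto simp: path_edges_def)
qed

definition leaves_at :: "nat list \<Rightarrow> nat \<Rightarrow> nat set" where
  "leaves_at L j = {i. i < length L \<and> L!i = j}"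

definition upper_sum :: "(nat \<Rightarrow> int) \<Rightarrow> nat list \<Rightarrow> nat \<Rightarrow> int" where
  "upper_sum x L j = (\<Sum>i | i < length L \<and> j \<le> L!i. x i)"

text \<open>A chain cover is encoded by the list L placing leaf i at vertex L!i of the path
  0 - 1 - ... - (n-4), with k the four-valent vertex; upper_sum x L j is the flow
  through the edge {j-1, j} towards j.\<close>

definition chain_leaves :: "nat \<Rightarrow> (nat \<Rightarrow> int) \<Rightarrow> nat list \<Rightarrow> nat \<Rightarrow> bool" where
  "chain_leaves n x L k \<longleftrightarrow> length L = n \<and> k \<le> n - 4 \<and> (\<forall>i<n. L!i \<le> n - 4) \<and>
     (\<forall>j\<le>n - 4. path_degree (n - 4) j + card (leaves_at L j) = (if j = k then 4 else 3)) \<and>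
     (\<forall>j. 1 \<le> j \<and> j \<le> n - 4 \<longrightarrow> 0 < upper_sum x L j)"

lemma finite_leaves_at [simp]: "finite (leaves_at L j)"
  by (simp add: leaves_at_def)

lemma leaves_at_update:
  assumes "c < length L"
  shows "leaves_at (L[c := k]) j = (if j = k then insert c (leaves_at L j) else leaves_at L j - {c})"
  using assms by (auto simp: leaves_at_def nth_list_update)

lemma upper_sum_Suc: "upper_sum x L j = sum x (leaves_at L j) + upper_sum x L (Suc j)"
proof -
  have split: "{i. i < length L \<and> j \<le> L!i} = leaves_at L j \<union> {i. i < length L \<and> Suc j \<le> L!i}"
    by (auto simp: leaves_at_def)
  show ?thesis
    unfolding upper_sum_def split by (rule sum.union_disjoint) (auto simp: leaves_at_def)
qed

lemma upper_sum_move_up: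
  assumes "c < length L" "L!c = k"
  shows "upper_sum x (L[c := Suc k]) j = upper_sum x L j + (if j = Suc k then x c else 0)"
proof -
  have "{i. i < length L \<and> j \<le> L[c := Suc k]!i} =
      (if j = Suc k then insert c {i. i < length L \<and> j \<le> L!i} else {i. i < length L \<and> j \<le> L!i})"
    using assms by (auto simp: nth_list_update)
  then show ?thesis using assms by (simp add: upper_sum_def)
qed

lemma upper_sum_move_down:
  assumes "a < length L" "L!a = Suc k"
  shows "upper_sum x (L[a := k]) j = upper_sum x L j - (if j = Suc k then x a else 0)"
proof -
  have "L[a := k, a := Suc k] = L" using assms by (metis list_update_id list_update_overwrite)
  then show ?thesis using upper_sum_move_up[of a "L[a := k]" k x j] assms by simp
qed

lemma chain_leavesD:
  assumes "chain_leaves n x L k"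
  shows "length L = n" "k \<le> n - 4" "i < n \<Longrightarrow> L!i \<le> n - 4"
    and "j \<le> n - 4 \<Longrightarrow> path_degree (n - 4) j + card (leaves_at L j) = (if j = k then 4 else 3)"
    and "1 \<le> j \<Longrightarrow> j \<le> n - 4 \<Longrightarrow> 0 < upper_sum x L j"
  using assms by (auto simp: chain_leaves_def)

lemma chain_leaves_leaves_at_nonempty:
  assumes "chain_leaves n x L k" "j \<le> n - 4"
  shows "leaves_at L j \<noteq> {}"
  using chain_leavesD(4)[OF assms] by (auto simp: path_degree_def split: if_splits)

lemma chain_leaves_two_le_card:
  assumes "chain_leaves n x L k"
  shows "2 \<le> card (leaves_at L k)"
  using chain_leavesD(4)[OF assms chain_leavesD(2)[OF assms]]
  by (auto simp: path_degree_def split: if_splits)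

lemma chain_leaves_upper_sum_nonneg:
  assumes "chain_leaves n x L k" and x: "(\<Sum>i<n. x i) = 0"
  shows "0 \<le> upper_sum x L j"
proof (cases "j = 0 \<or> n - 4 < j")
  case True
  moreover have "upper_sum x L 0 = 0"
    using x chain_leavesD(1)[OF assms(1)] by (simp add: upper_sum_def lessThan_def)
  moreover have "upper_sum x L j = 0" if "n - 4 < j"
    using that chain_leavesD(1,3)[OF assms(1)] by (fastforce simp: upper_sum_def intro: sum.neutral)
  ultimately show ?thesis by auto
next
  case False
  then have "0 < upper_sum x L j" using chain_leavesD(5)[OF assms(1), of j] by simp
  then show ?thesis by simp
qed

lemma chain_leaves_update:
  assumes L: "chain_leaves n x L k" and c: "c \<in> leaves_at L k" and k': "k' \<le> n - 4" "k' \<noteq> k"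
    and pos: "\<forall>j. 1 \<le> j \<and> j \<le> n - 4 \<longrightarrow> 0 < upper_sum x (L[c := k']) j"
  shows "chain_leaves n x (L[c := k']) k'"
  unfolding chain_leaves_def
proof (intro conjI allI impI)
  have c_lt: "c < length L" using c by (simp add: leaves_at_def)
  fix j assume j: "j \<le> n - 4"
  have "c \<notin> leaves_at L j'" if "j' \<noteq> k" for j'
    using c that by (simp add: leaves_at_def)
  then have card_eq: "card (leaves_at (L[c := k']) j) =
      card (leaves_at L j) + (if j = k' then 1 else 0) - (if j = k then 1 else 0)"
    using c k' by (simp add: leaves_at_update[OF c_lt])
  have "1 \<le> card (leaves_at L k)"
    using c by (auto simp: Suc_le_eq card_gt_0_iff)
  then show "path_degree (n - 4) j + card (leaves_at (L[c := k']) j) = (if j = k' then 4 else 3)"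
    using card_eq chain_leavesD(4)[OF L j] k' by (auto split: if_splits)
next
  fix i assume "i < n"
  then show "L[c := k'] ! i \<le> n - 4"
    using chain_leavesD(1,3)[OF L] k' by (cases "i = c") auto
qed (use L k' pos in \<open>auto simp: chain_leaves_def nth_list_update\<close>)

lemma chain_leaves_move_up:
  assumes L: "chain_leaves n x L k" and x: "(\<Sum>i<n. x i) = 0" and k: "k < n - 4"
    and c: "c \<in> leaves_at L k" and c_max: "\<forall>d\<in>leaves_at L k. x d \<le> x c"
  shows "chain_leaves n x (L[c := Suc k]) (Suc k)"
proof (rule chain_leaves_update[OF L c])
  have c_lt: "c < length L" "L!c = k" using c by (auto simp: leaves_at_def)
  have "0 < upper_sum x L (Suc k) + x c"
  proof (rule ccontr)
    assume "\<not> ?thesis"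
    moreover have "0 < upper_sum x L (Suc k)" using chain_leavesD(5)[OF L] k by simp
    ultimately have neg: "x c < 0" "upper_sum x L (Suc k) + x c \<le> 0" by auto
    have "sum x (leaves_at L k) \<le> of_nat (card (leaves_at L k)) * x c"
      using sum_bounded_above[of "leaves_at L k" x "x c"] c_max by simp
    also have "\<dots> \<le> 2 * x c"
      using chain_leaves_two_le_card[OF L] neg(1) by (simp add: mult_right_mono_neg)
    finally have "upper_sum x L k < 0"
      using upper_sum_Suc[of x L k] neg by simp
    then show False using chain_leaves_upper_sum_nonneg[OF L x, of k] by simp
  qed
  then show "\<forall>j. 1 \<le> j \<and> j \<le> n - 4 \<longrightarrow> 0 < upper_sum x (L[c := Suc k]) j"
    using chain_leavesD(5)[OF L] by (simp add: upper_sum_move_up[OF c_lt])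
qed (use k in auto)

lemma chain_leaves_move_down:
  assumes L: "chain_leaves n x L (Suc k)" and x: "(\<Sum>i<n. x i) = 0"
    and a: "a \<in> leaves_at L (Suc k)" and a_min: "\<forall>d\<in>leaves_at L (Suc k). x a \<le> x d"
  shows "chain_leaves n x (L[a := k]) k"
proof (rule chain_leaves_update[OF L a])
  have a_lt: "a < length L" "L!a = Suc k" using a by (auto simp: leaves_at_def)
  have k: "Suc k \<le> n - 4" using chain_leavesD(2)[OF L] .
  have "x a < upper_sum x L (Suc k)"
  proof (rule ccontr)
    assume "\<not> ?thesis"
    moreover have "0 < upper_sum x L (Suc k)" using chain_leavesD(5)[OF L] k by simp
    ultimately have pos: "0 < x a" "upper_sum x L (Suc k) \<le> x a" by auto
    have "2 * x a \<le> of_nat (card (leaves_at L (Suc k))) * x a"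
      using chain_leaves_two_le_card[OF L] pos(1) by (simp add: mult_right_mono)
    also have "\<dots> \<le> sum x (leaves_at L (Suc k))"
      using sum_bounded_below[of "leaves_at L (Suc k)" "x a" x] a_min by simp
    finally have "2 * x a \<le> upper_sum x L (Suc k)"
      using upper_sum_Suc[of x L "Suc k"] chain_leaves_upper_sum_nonneg[OF L x, of "Suc (Suc k)"]
      by simp
    then show False using pos by simp
  qed
  then show "\<forall>j. 1 \<le> j \<and> j \<le> n - 4 \<longrightarrow> 0 < upper_sum x (L[a := k]) j"
    using chain_leavesD(5)[OF L] by (simp add: upper_sum_move_down[OF a_lt])
qed (use chain_leavesD(2)[OF L] in auto)

section \<open>Sorting the leaves\<close>

lemma ex_arg_max_if_finite:
  fixes f :: "'a \<Rightarrow> 'b::linorder"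
  assumes "finite A" "A \<noteq> {}"
  shows "\<exists>a\<in>A. \<forall>b\<in>A. f b \<le> f a"
proof -
  have "Max (f ` A) \<in> f ` A" using assms by (intro Max_in) auto
  then obtain a where "a \<in> A" "Max (f ` A) = f a" by auto
  then show ?thesis using Max_ge[of "f ` A"] assms by auto
qed

lemma ex_arg_min_if_finite:
  fixes f :: "'a \<Rightarrow> 'b::linorder"
  assumes "finite A" "A \<noteq> {}"
  shows "\<exists>a\<in>A. \<forall>b\<in>A. f a \<le> f b"
proof -
  have "Min (f ` A) \<in> f ` A" using assms by (intro Min_in) auto
  then obtain a where "a \<in> A" "Min (f ` A) = f a" by auto
  then show ?thesis using Min_le[of "f ` A"] assms by auto
qed

text \<open>For leaves a, b < n, sort_key orders lexicographically by (x a, a).\<close>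

definition sort_key :: "nat \<Rightarrow> (nat \<Rightarrow> int) \<Rightarrow> nat \<Rightarrow> int" where
  "sort_key n x l = x l * int n + int l"

definition inversions :: "nat \<Rightarrow> (nat \<Rightarrow> int) \<Rightarrow> nat list \<Rightarrow> (nat \<times> nat) set" where
  "inversions n x L = {(a, b). a < n \<and> b < n \<and> L!a < L!b \<and> sort_key n x b < sort_key n x a}"

lemma sort_key_less_of_less:
  assumes "x a < x b" "a < n"
  shows "sort_key n x a < sort_key n x b"
proof -
  have "(x a + 1) * int n \<le> x b * int n" using assms by (intro mult_right_mono) auto
  then show ?thesis using assms unfolding sort_key_def by (simp add: algebra_simps)
qed

lemma sort_key_le_imp_le:
  "sort_key n x a \<le> sort_key n x b \<Longrightarrow> b < n \<Longrightarrow> x a \<le> x b"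
  using sort_key_less_of_less[of x b a n] by force

lemma sort_key_eq_iff:
  assumes "a < n" "b < n"
  shows "sort_key n x a = sort_key n x b \<longleftrightarrow> a = b"
proof
  assume eq: "sort_key n x a = sort_key n x b"
  then have "x a = x b" using sort_key_le_imp_le[of n x] assms by (metis order_refl order_antisym)
  then show "a = b" using eq by (simp add: sort_key_def)
qed simp

lemma finite_inversions: "finite (inversions n x L)"
  by (rule finite_subset[of _ "{..<n} \<times> {..<n}"]) (auto simp: inversions_def)

lemma inversions_move_up:
  assumes "length L = n" and c: "c \<in> leaves_at L k"
    and c_max: "\<forall>d\<in>leaves_at L k. sort_key n x d \<le> sort_key n x c"
  shows "inversions n x (L[c := Suc k]) = inversions n x L - {c} \<times> leaves_at L (Suc k)"
  using assms sort_key_eq_iff[of c n _ x]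
  by (fastforce simp: inversions_def leaves_at_def nth_list_update split: if_splits)

lemma inversions_move_down:
  assumes "length L = n" and a: "a \<in> leaves_at L (Suc k)"
    and a_min: "\<forall>d\<in>leaves_at L (Suc k). sort_key n x a \<le> sort_key n x d"
  shows "inversions n x (L[a := k]) = inversions n x L - leaves_at L k \<times> {a}"
  using assms sort_key_eq_iff[of a n _ x]
  by (fastforce simp: inversions_def leaves_at_def nth_list_update split: if_splits)

lemma adjacent_inversion:
  assumes L: "chain_leaves n x L k" and inv: "inversions n x L \<noteq> {}"
  shows "\<exists>j a b. j < n - 4 \<and> a \<in> leaves_at L j \<and> b \<in> leaves_at L (Suc j) \<and>
    sort_key n x b < sort_key n x a"
proof -
  have "\<exists>j a' b'. j < n - 4 \<and> a' \<in> leaves_at L j \<and> b' \<in> leaves_at L (Suc j) \<and>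
      sort_key n x b' < sort_key n x a'" if "(a, b) \<in> inversions n x L" for a b
    using that
  proof (induction "L!b - L!a" arbitrary: a b rule: less_induct)
    case less
    then have ab: "a < n" "b < n" "L!a < L!b" "sort_key n x b < sort_key n x a"
      by (auto simp: inversions_def)
    have "L!b \<le> n - 4" using chain_leavesD(3)[OF L ab(2)] .
    show ?case
    proof (cases "L!b = Suc (L!a)")
      case True
      then show ?thesis
        using ab \<open>L!b \<le> n - 4\<close> chain_leavesD(1)[OF L] by (force simp: leaves_at_def)
    next
      case False
      then have gap: "Suc (L!a) < L!b" using ab by simp
      \<comment> \<open>any leaf c just above a forms an inversion of smaller gap with a or with b\<close>
      then obtain c where c: "c \<in> leaves_at L (Suc (L!a))"
        using chain_leaves_leaves_at_nonempty[OF L] \<open>L!b \<le> n - 4\<close> by fastforce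
      then have c': "c < n" "L!c = Suc (L!a)" using chain_leavesD(1)[OF L] by (auto simp: leaves_at_def)
      show ?thesis
      proof (cases "sort_key n x b < sort_key n x c")
        case True
        then have "(c, b) \<in> inversions n x L" using c' ab gap by (simp add: inversions_def)
        then show ?thesis using less.hyps[of b c] c' gap by simp
      next
        case False
        then have "sort_key n x c < sort_key n x a" using ab by simp
        then show ?thesis
          using c ab gap \<open>L!b \<le> n - 4\<close> chain_leavesD(1)[OF L]
          by (intro exI[of _ "L!a"] exI[of _ a] exI[of _ c]) (auto simp: leaves_at_def)
      qed
    qed
  qed
  then show ?thesis using inv by auto
qed

definition leaves_below :: "nat list \<Rightarrow> nat \<Rightarrow> nat set" where
  "leaves_below L j = {i. i < length L \<and> L!i < j}"

lemma finite_leaves_below [simp]: "finite (leaves_below L j)"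
  by (simp add: leaves_below_def)

lemma leaves_below_Suc: "leaves_below L (Suc j) = leaves_below L j \<union> leaves_at L j"
  by (auto simp: leaves_below_def leaves_at_def)

lemma card_leaves_below_mono: "j \<le> j' \<Longrightarrow> card (leaves_below L j) \<le> card (leaves_below L j')"
  by (rule card_mono) (auto simp: leaves_below_def)

text \<open>The valences fix the number of leaves at each vertex once the four-valent vertex is known.\<close>

lemma card_leaves_below_eq:
  assumes L: "chain_leaves n x L k" and L': "chain_leaves n y L' k"
  shows "card (leaves_below L j) = card (leaves_below L' j)"
proof (induction j)
  case 0
  show ?case by (simp add: leaves_below_def)
next
  case (Suc j)
  have "card (leaves_at L j) = card (leaves_at L' j)"
  proof (cases "j \<le> n - 4")
    case True
    then show ?thesis using chain_leavesD(4)[OF L True] chain_leavesD(4)[OF L' True] by simp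
  next
    case False
    then have "leaves_at L j = {}" "leaves_at L' j = {}"
      using chain_leavesD(1,3)[OF L] chain_leavesD(1,3)[OF L'] by (fastforce simp: leaves_at_def)+
    then show ?thesis by simp
  qed
  moreover have "leaves_below M j \<inter> leaves_at M j = {}" for M
    by (auto simp: leaves_below_def leaves_at_def)
  ultimately show ?case
    using Suc.IH by (simp add: leaves_below_Suc card_Un_disjoint)
qed

text \<open>In a list without inversions, the position of a leaf in the sorted order pins down
  its vertex.\<close>

lemma sorted_rank_bounds:
  assumes "length L = n" "inversions n x L = {}" "l < n"
  shows "card (leaves_below L (L!l)) \<le> card {i. i < n \<and> sort_key n x i < sort_key n x l}"
    and "card {i. i < n \<and> sort_key n x i < sort_key n x l} < card (leaves_below L (Suc (L!l)))"
proof -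
  have "leaves_below L (L!l) \<subseteq> {i. i < n \<and> sort_key n x i < sort_key n x l}"
    using assms sort_key_eq_iff[of _ n l x]
    by (fastforce simp: leaves_below_def inversions_def)
  then show "card (leaves_below L (L!l)) \<le> card {i. i < n \<and> sort_key n x i < sort_key n x l}"
    by (rule card_mono[rotated]) simp
  have "{i. i < n \<and> sort_key n x i < sort_key n x l} \<subset> leaves_below L (Suc (L!l))"
    using assms by (fastforce simp: leaves_below_def inversions_def not_less_eq)
  then show "card {i. i < n \<and> sort_key n x i < sort_key n x l} < card (leaves_below L (Suc (L!l)))"
    by (rule psubset_card_mono[rotated]) (simp add: leaves_below_def)
qed

lemma sorted_chain_leaves_unique:
  assumes L1: "chain_leaves n x L1 k" and L2: "chain_leaves n x L2 k"
    and "inversions n x L1 = {}" "inversions n x L2 = {}"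
  shows "L1 = L2"
proof -
  have not_less: "\<not> M1!l < M2!l"
    if M: "chain_leaves n x M1 k" "chain_leaves n x M2 k"
      "inversions n x M1 = {}" "inversions n x M2 = {}" and l: "l < n" for M1 M2 l
  proof
    assume lt: "M1!l < M2!l"
    have "card {i. i < n \<and> sort_key n x i < sort_key n x l} < card (leaves_below M1 (Suc (M1!l)))"
      using sorted_rank_bounds(2)[OF chain_leavesD(1)[OF M(1)] M(3) l] .
    also have "\<dots> = card (leaves_below M2 (Suc (M1!l)))"
      using card_leaves_below_eq[OF M(1,2)] .
    also have "\<dots> \<le> card (leaves_below M2 (M2!l))"
      using lt by (intro card_leaves_below_mono) simp
    also have "\<dots> \<le> card {i. i < n \<and> sort_key n x i < sort_key n x l}"
      using sorted_rank_bounds(1)[OF chain_leavesD(1)[OF M(2)] M(4) l] .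
    finally show False by simp
  qed
  show ?thesis
  proof (rule nth_equalityI)
    show "length L1 = length L2" using chain_leavesD(1)[OF L1] chain_leavesD(1)[OF L2] by simp
    fix l assume "l < length L1"
    then have "l < n" using chain_leavesD(1)[OF L1] by simp
    then show "L1!l = L2!l" using not_less[OF L1 L2] not_less[OF L2 L1] assms(3,4) by fastforce
  qed
qed

section \<open>Bounded edges of the Hurwitz cycle\<close>

lemma path_edges_neighbour:
  assumes inj: "inj_on w {..N}" and j: "j \<le> N"
  shows "{a, w j} \<in> path_edges w N \<longleftrightarrow> (\<exists>i\<le>N. a = w i \<and> (Suc i = j \<or> i = Suc j))"
proof
  assume "{a, w j} \<in> path_edges w N"
  then obtain i where i: "i < N" "{a, w j} = {w i, w (Suc i)}" by (auto simp: path_edges_def)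
  then have "a = w i \<and> w j = w (Suc i) \<or> a = w (Suc i) \<and> w j = w i"
    by (auto simp: doubleton_eq_iff)
  moreover have "w j = w i' \<longleftrightarrow> j = i'" if "i' \<le> N" for i'
    using inj j that by (auto simp: inj_on_eq_iff)
  ultimately show "\<exists>i\<le>N. a = w i \<and> (Suc i = j \<or> i = Suc j)"
    using i(1) by (metis Suc_leI less_imp_le_nat)
next
  assume "\<exists>i\<le>N. a = w i \<and> (Suc i = j \<or> i = Suc j)"
  then obtain i where "i \<le> N" "a = w i" "Suc i = j \<or> i = Suc j" by blast
  then show "{a, w j} \<in> path_edges w N"
    using j by (auto simp: path_edges_def insert_commute)
qed

lemma collapse_path_edges:
  assumes g: "\<forall>i\<le>Suc m. g i = (if i \<le> t then i else i - 1)" and t: "t \<le> m"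
  shows "(\<lambda>i. {g i, g (Suc i)}) ` ({..<Suc m} - {t}) = path_edges (\<lambda>i. i) m"
proof
  show "(\<lambda>i. {g i, g (Suc i)}) ` ({..<Suc m} - {t}) \<subseteq> path_edges (\<lambda>i. i) m"
  proof
    fix e assume "e \<in> (\<lambda>i. {g i, g (Suc i)}) ` ({..<Suc m} - {t})"
    then obtain i where i: "i < Suc m" "i \<noteq> t" "e = {g i, g (Suc i)}" by auto
    show "e \<in> path_edges (\<lambda>i. i) m"
    proof (cases "i < t")
      case True
      then show ?thesis using g i t by (auto simp: path_edges_def intro!: image_eqI[of _ _ i])
    next
      case False
      then show ?thesis using g i by (auto simp: path_edges_def intro!: image_eqI[of _ _ "i - 1"])
    qed
  qed
  show "path_edges (\<lambda>i. i) m \<subseteq> (\<lambda>i. {g i, g (Suc i)}) ` ({..<Suc m} - {t})"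
  proof
    fix e assume "e \<in> path_edges (\<lambda>i. i) m"
    then obtain j where j: "j < m" "e = {j, Suc j}" by (auto simp: path_edges_def)
    show "e \<in> (\<lambda>i. {g i, g (Suc i)}) ` ({..<Suc m} - {t})"
    proof (cases "j < t")
      case True
      then show ?thesis using g j by (auto intro!: image_eqI[of _ _ j])
    next
      case False
      then show ?thesis using g j by (auto intro!: image_eqI[of _ _ "Suc j"])
    qed
  qed
qed

text \<open>The path 0 - ... - k - v - (k+1) - ... underlying a bounded edge of the Hurwitz cycle, with
  v = n - 3 the free vertex, and the position on it of each leaf when leaf c is moved to v.\<close>

definition cell_path :: "nat \<Rightarrow> nat \<Rightarrow> nat \<Rightarrow> nat" where
  "cell_path k v i = (if i \<le> k then i else if i = Suc k then v else i - 1)"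

definition cell_pos :: "nat list \<Rightarrow> nat \<Rightarrow> nat \<Rightarrow> nat \<Rightarrow> nat" where
  "cell_pos L k c l = (if l = c then Suc k else if L!l \<le> k then L!l else Suc (L!l))"

locale hurwitz_setting =
  fixes n :: nat and x :: "nat \<Rightarrow> int" and p :: "nat \<Rightarrow> real"
  assumes four_le_n: "4 \<le> n" and sum_x_zero: "(\<Sum>i<n. x i) = 0"
    and p_strict_mono: "\<forall>i j. i < j \<and> j \<le> n - 4 \<longrightarrow> p i < p j"
begin

abbreviation spine :: "nat set set" where
  "spine \<equiv> path_edges (\<lambda>i. i) (n - 4)"

context
  fixes L :: "nat list" and k c :: nat
  assumes L: "chain_leaves n x L k" and k: "k < n - 4" and c: "c \<in> leaves_at L k"
    and L': "chain_leaves n x (L[c := Suc k]) (Suc k)"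
begin

abbreviation W :: "nat \<Rightarrow> nat" where
  "W \<equiv> cell_path k (n - 3)"

abbreviation cell :: ctype where
  "cell \<equiv> (path_edges W (n - 3), L[c := n - 3])"

lemma c_leaf: "c < n" "L!c = k"
  using c chain_leavesD(1)[OF L] by (auto simp: leaves_at_def)

lemma n_minus_3: "n - 3 = Suc (n - 4)"
  using four_le_n by simp

lemma inj_W: "inj_on W {..n - 3}"
  using k by (auto intro!: inj_onI simp: cell_path_def split: if_splits)

lemma W_image: "W ` {..n - 3} = {..n - 3}"
proof
  show "W ` {..n - 3} \<subseteq> {..n - 3}" using k by (auto simp: cell_path_def)
  show "{..n - 3} \<subseteq> W ` {..n - 3}"
  proof
    fix u assume u: "u \<in> {..n - 3}"
    consider "u \<le> k" | "u = n - 3" | "k < u" "u < n - 3" using u by force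
    then show "u \<in> W ` {..n - 3}"
    proof cases
      case 1 then show ?thesis using k by (intro image_eqI[of _ _ u]) (auto simp: cell_path_def)
    next
      case 2 then show ?thesis using k by (intro image_eqI[of _ _ "Suc k"]) (auto simp: cell_path_def)
    next
      case 3 then show ?thesis by (intro image_eqI[of _ _ "Suc u"]) (auto simp: cell_path_def)
    qed
  qed
qed

lemma cell_pos_spec:
  "\<forall>l<length (L[c := n - 3]). cell_pos L k c l \<le> n - 3 \<and> L[c := n - 3]!l = W (cell_pos L k c l)"
  using k c_leaf chain_leavesD(1,3)[OF L] n_minus_3
  by (auto simp: cell_pos_def cell_path_def nth_list_update)

lemma cell_flow:
  assumes "i < n - 3"
  shows "flow x cell (W i) (W (Suc i)) = (\<Sum>l | l < n \<and> i < cell_pos L k c l. x l)"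
    and "flow x cell (W (Suc i)) (W i) = - (\<Sum>l | l < n \<and> i < cell_pos L k c l. x l)"
  using flow_path_edges[OF inj_W assms cell_pos_spec] sum_x_zero chain_leavesD(1)[OF L] by simp_all

text \<open>The flows through the edges of the cell are flows of the two chain covers.\<close>

lemma cell_flow_pos:
  assumes i: "i < n - 3"
  shows "0 < (\<Sum>l | l < n \<and> i < cell_pos L k c l. x l)"
proof -
  have len: "length L = n" "length (L[c := Suc k]) = n" using chain_leavesD(1)[OF L] by simp_all
  consider "i < k" | "i = k" | "i = Suc k" | "Suc k < i" by linarith
  then show ?thesis
  proof cases
    case 1
    then have "{l. l < n \<and> i < cell_pos L k c l} = {l. l < length L \<and> Suc i \<le> L!l}"
      using c_leaf len by (auto simp: cell_pos_def)
    then show ?thesis using chain_leavesD(5)[OF L, of "Suc i"] 1 k by (simp add: upper_sum_def)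
  next
    case 2
    then have "{l. l < n \<and> i < cell_pos L k c l} =
        {l. l < length (L[c := Suc k]) \<and> Suc k \<le> L[c := Suc k]!l}"
      using c_leaf len by (auto simp: cell_pos_def nth_list_update)
    then show ?thesis using chain_leavesD(5)[OF L', of "Suc k"] 2 k by (simp add: upper_sum_def)
  next
    case 3
    then have "{l. l < n \<and> i < cell_pos L k c l} = {l. l < length L \<and> Suc k \<le> L!l}"
      using c_leaf len by (auto simp: cell_pos_def)
    then show ?thesis using chain_leavesD(5)[OF L, of "Suc k"] 3 k by (simp add: upper_sum_def)
  next
    case 4
    then have "{l. l < n \<and> i < cell_pos L k c l} = {l. l < length L \<and> i \<le> L!l}"
      using c_leaf len by (auto simp: cell_pos_def)
    then show ?thesis using chain_leavesD(5)[OF L, of i] 4 i n_minus_3 by (simp add: upper_sum_def)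
  qed
qed

lemma W_k: "W k = k" and W_Suc_k: "W (Suc k) = n - 3" and W_Suc_Suc_k: "W (Suc (Suc k)) = Suc k"
  by (simp_all add: cell_path_def)

lemma cell_neighbours_free_vertex: "{a, n - 3} \<in> path_edges W (n - 3) \<longleftrightarrow> a = k \<or> a = Suc k"
proof -
  have "{a, n - 3} \<in> path_edges W (n - 3) \<longleftrightarrow>
      (\<exists>i\<le>n - 3. a = W i \<and> (Suc i = Suc k \<or> i = Suc (Suc k)))"
    using path_edges_neighbour[OF inj_W, of "Suc k" a] k W_Suc_k by simp
  also have "\<dots> \<longleftrightarrow> a = W k \<or> a = W (Suc (Suc k))"
  proof
    assume "a = W k \<or> a = W (Suc (Suc k))"
    then show "\<exists>i\<le>n - 3. a = W i \<and> (Suc i = Suc k \<or> i = Suc (Suc k))"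
    proof
      show "a = W k \<Longrightarrow> ?thesis" using k by (intro exI[of _ k]) simp
      show "a = W (Suc (Suc k)) \<Longrightarrow> ?thesis" using k n_minus_3 by (intro exI[of _ "Suc (Suc k)"]) simp
    qed
  qed auto
  also have "\<dots> \<longleftrightarrow> a = k \<or> a = Suc k"
    using W_k W_Suc_Suc_k by simp
  finally show ?thesis .
qed

lemma in_nb_cell: "in_nb x n cell = {k}"
  and out_nb_cell: "out_nb x n cell = {Suc k}"
proof -
  have "flow x cell k (n - 3) > 0" "flow x cell (n - 3) k < 0"
    using cell_flow[of k] cell_flow_pos[of k] k W_k W_Suc_k by simp_all
  moreover have "flow x cell (Suc k) (n - 3) < 0" "flow x cell (n - 3) (Suc k) > 0"
    using cell_flow[of "Suc k"] cell_flow_pos[of "Suc k"] k W_Suc_k W_Suc_Suc_k by simp_all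
  ultimately show "in_nb x n cell = {k}" "out_nb x n cell = {Suc k}"
    using cell_neighbours_free_vertex by (auto simp: in_nb_def out_nb_def)
qed

lemma val_cell:
  assumes u: "u \<le> n - 3"
  shows "val cell u = 3"
proof -
  have leaves: "{i. i < length (L[c := n - 3]) \<and> L[c := n - 3]!i = u} =
      (if u = n - 3 then {c} else leaves_at L u - {c})"
    using leaves_at_update[of c L "n - 3" u] c_leaf chain_leavesD(1,3)[OF L] n_minus_3
    by (force simp: leaves_at_def)
  show ?thesis
  proof (cases "u = n - 3")
    case True
    then show ?thesis
      using card_path_edges_at[OF inj_W, of "Suc k"] k W_Suc_k leaves
      by (simp add: val_def path_degree_def)
  next
    case False
    then have um: "u \<le> n - 4" using u by simp
    obtain j where j: "j \<le> n - 3" "W j = u" "path_degree (n - 3) j = path_degree (n - 4) u"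
    proof (cases "u \<le> k")
      case True
      then show ?thesis using that[of u] k by (simp add: cell_path_def path_degree_def)
    next
      case False
      then show ?thesis using that[of "Suc u"] um n_minus_3 by (simp add: cell_path_def path_degree_def)
    qed
    have "card (leaves_at L u - {c}) = card (leaves_at L u) - (if u = k then 1 else 0)"
      using c by (auto simp: leaves_at_def)
    moreover have "card (leaves_at L k) \<ge> 1"
      using c by (auto simp: Suc_le_eq card_gt_0_iff)
    ultimately show ?thesis
      using card_path_edges_at[OF inj_W j(1)] j chain_leavesD(4)[OF L um] leaves False
      by (auto simp: val_def)
  qed
qed

lemma ntype_cell: "ntype n {..n - 3} cell"
  unfolding ntype_def fst_conv snd_conv
proof (intro conjI allI impI ballI)
  show "is_tree {..n - 3} (path_edges W (n - 3))"
    using is_tree_path_edges[OF inj_W] W_image by simp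
  show "length (L[c := n - 3]) = n" using chain_leavesD(1)[OF L] by simp
  show "L[c := n - 3] ! i \<in> {..n - 3}" if "i < n" for i
    using that chain_leavesD(1)[OF L] chain_leavesD(3)[OF L that] n_minus_3 by (cases "i = c") auto
  show "3 \<le> val cell u" if "u \<in> {..n - 3}" for u
    using val_cell that by simp
qed

lemma edge_cell_cell: "edge_cell n x p cell"
  unfolding edge_cell_def
proof (intro conjI allI impI)
  show "ntype n {..n - 3} cell" by (rule ntype_cell)
  show "val cell u = 3" if "u \<le> n - 3" for u
    using val_cell that .
  show "flow x cell a b \<noteq> 0" if e: "{a, b} \<in> fst cell" for a b
  proof -
    obtain i where i: "i < n - 3" "{a, b} = {W i, W (Suc i)}"
      using e by (auto simp: path_edges_def)
    then show ?thesis
      using cell_flow[OF i(1)] cell_flow_pos[OF i(1)] by (auto simp: doubleton_eq_iff)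
  qed
  show "0 < flow x cell a b"
    if marked: "{a, b} \<in> fst cell \<and> a < n - 3 \<and> b < n - 3 \<and> p a < p b" for a b
  proof -
    obtain i where i: "i < n - 3" "{a, b} = {W i, W (Suc i)}"
      using marked by (auto simp: path_edges_def)
    have "W i \<noteq> n - 3" "W (Suc i) \<noteq> n - 3" using i(2) marked by (auto simp: doubleton_eq_iff)
    then have "i \<noteq> k" "i \<noteq> Suc k" using W_Suc_k by auto
    then have "W i < W (Suc i)" using i(1) by (auto simp: cell_path_def)
    moreover have "\<not> (a = W (Suc i) \<and> b = W i \<and> W i < W (Suc i))"
      using p_strict_mono marked n_minus_3 by force
    ultimately have "a = W i" "b = W (Suc i)" using i(2) by (auto simp: doubleton_eq_iff)
    then show ?thesis using cell_flow[OF i(1)] cell_flow_pos[OF i(1)] by simp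
  qed
qed (use in_nb_cell out_nb_cell p_strict_mono k in auto)

lemma contract_cell:
  assumes t: "t = k \<or> t = Suc k"
  shows "contract n cell t = (spine, L[c := t])"
proof -
  define f where "f = (\<lambda>u. if u = n - 3 then t else u)"
  have "{t, n - 3} = {W t, W (Suc t)}" using t W_k W_Suc_k W_Suc_Suc_k by auto
  then have "fst cell - {{t, n - 3}} = (\<lambda>i. {W i, W (Suc i)}) ` ({..<n - 3} - {t})"
    unfolding path_edges_def fst_conv using t k
    by (subst inj_on_image_set_diff[OF inj_on_path_edge[OF inj_W]]) auto
  then have "(\<lambda>e. f ` e) ` (fst cell - {{t, n - 3}}) =
      (\<lambda>i. {f (W i), f (W (Suc i))}) ` ({..<Suc (n - 4)} - {t})"
    using n_minus_3 by (simp add: image_image)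
  also have "\<dots> = spine"
    by (rule collapse_path_edges) (use t k n_minus_3 in \<open>auto simp: f_def cell_path_def\<close>)
  finally have edges: "(\<lambda>e. f ` e) ` (fst cell - {{t, n - 3}}) = spine" .
  have "map f (L[c := n - 3]) = L[c := t]"
  proof (rule nth_equalityI)
    fix i assume "i < length (map f (L[c := n - 3]))"
    then have "i < n" using chain_leavesD(1)[OF L] by simp
    then show "map f (L[c := n - 3]) ! i = L[c := t] ! i"
      using chain_leavesD(1)[OF L] chain_leavesD(3)[OF L \<open>i < n\<close>] n_minus_3
      by (cases "i = c") (auto simp: f_def)
  qed simp
  then show ?thesis
    using edges by (simp add: contract_def Let_def f_def)
qed

lemma hur_edge_move: "((spine, L), (spine, L[c := Suc k])) \<in> hur_edge n x p"
  unfolding hur_edge_def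
proof (intro CollectI case_prodI exI conjI)
  show "(spine, L) = contract n cell k"
    using contract_cell[of k] list_update_id[of L c] c_leaf by simp
  show "(spine, L[c := Suc k]) = contract n cell (Suc k)"
    using contract_cell[of "Suc k"] by simp
qed (use edge_cell_cell in_nb_cell out_nb_cell in auto)

end


section \<open>Joining chain covers\<close>

abbreviation joined :: "ctype \<Rightarrow> ctype \<Rightarrow> bool" where
  "joined C C' \<equiv> (C, C') \<in> (hur_edge n x p \<union> (hur_edge n x p)\<inverse>)\<^sup>*"

lemma joined_sym: "joined C C' \<Longrightarrow> joined C' C"
  using sym_rtrancl[OF sym_Un_converse] by (rule symD)

lemma move_up:
  assumes L: "chain_leaves n x L k" and k: "k < n - 4"
  obtains c where "c \<in> leaves_at L k" "\<forall>d\<in>leaves_at L k. sort_key n x d \<le> sort_key n x c"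
    and "chain_leaves n x (L[c := Suc k]) (Suc k)" "joined (spine, L) (spine, L[c := Suc k])"
    and "inversions n x (L[c := Suc k]) = inversions n x L - {c} \<times> leaves_at L (Suc k)"
proof -
  have "leaves_at L k \<noteq> {}" using chain_leaves_leaves_at_nonempty[OF L] k by simp
  then obtain c where c: "c \<in> leaves_at L k"
    and c_max: "\<forall>d\<in>leaves_at L k. sort_key n x d \<le> sort_key n x c"
    using ex_arg_max_if_finite[OF finite_leaves_at, of L k "sort_key n x"] by blast
  have "c < n" using c chain_leavesD(1)[OF L] by (simp add: leaves_at_def)
  then have "\<forall>d\<in>leaves_at L k. x d \<le> x c"
    using sort_key_le_imp_le bspec[OF c_max] by metis
  then have L': "chain_leaves n x (L[c := Suc k]) (Suc k)"
    by (rule chain_leaves_move_up[OF L sum_x_zero k c])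
  have "joined (spine, L) (spine, L[c := Suc k])"
    by (intro r_into_rtrancl UnI1 hur_edge_move[OF L k c L'])
  then show thesis
    by (rule that[OF c c_max L' _ inversions_move_up[OF chain_leavesD(1)[OF L] c c_max]])
qed

lemma move_down:
  assumes L: "chain_leaves n x L (Suc k)"
  obtains a where "a \<in> leaves_at L (Suc k)" "\<forall>d\<in>leaves_at L (Suc k). sort_key n x a \<le> sort_key n x d"
    and "chain_leaves n x (L[a := k]) k" "joined (spine, L) (spine, L[a := k])"
    and "inversions n x (L[a := k]) = inversions n x L - leaves_at L k \<times> {a}"
proof -
  have k: "k < n - 4" using chain_leavesD(2)[OF L] by simp
  have "leaves_at L (Suc k) \<noteq> {}" using chain_leaves_leaves_at_nonempty[OF L] k by simp
  then obtain a where a: "a \<in> leaves_at L (Suc k)"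
    and a_min: "\<forall>d\<in>leaves_at L (Suc k). sort_key n x a \<le> sort_key n x d"
    using ex_arg_min_if_finite[OF finite_leaves_at, of L "Suc k" "sort_key n x"] by blast
  have a': "a < length L" "L!a = Suc k" using a by (auto simp: leaves_at_def)
  have "\<forall>d\<in>leaves_at L (Suc k). x a \<le> x d"
  proof
    fix d assume d: "d \<in> leaves_at L (Suc k)"
    then have "d < n" using chain_leavesD(1)[OF L] by (simp add: leaves_at_def)
    then show "x a \<le> x d" using sort_key_le_imp_le bspec[OF a_min d] by metis
  qed
  then have L': "chain_leaves n x (L[a := k]) k"
    by (rule chain_leaves_move_down[OF L sum_x_zero a])
  have "L[a := k, a := Suc k] = L" using a' by (metis list_update_id list_update_overwrite)
  moreover have "a \<in> leaves_at (L[a := k]) k" using a' by (simp add: leaves_at_def)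
  ultimately have "((spine, L[a := k]), (spine, L)) \<in> hur_edge n x p"
    using hur_edge_move[OF L' k, of a] L by simp
  then have "joined (spine, L) (spine, L[a := k])"
    by (intro r_into_rtrancl UnI2) simp
  then show thesis
    by (rule that[OF a a_min L' _ inversions_move_down[OF chain_leavesD(1)[OF L] a a_min]])
qed

lemma move_heavy_up:
  assumes L: "chain_leaves n x L k" and "k \<le> j" "j \<le> n - 4"
  obtains L' where "chain_leaves n x L' j" "joined (spine, L) (spine, L')"
    and "inversions n x L' \<subseteq> inversions n x L" "\<forall>i<n. j \<le> L!i \<longrightarrow> L'!i = L!i"
proof -
  have "\<exists>L'. chain_leaves n x L' j \<and> joined (spine, L) (spine, L') \<and>
      inversions n x L' \<subseteq> inversions n x L \<and> (\<forall>i<n. j \<le> L!i \<longrightarrow> L'!i = L!i)"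
    using assms(2,3)
  proof (induction j rule: dec_induct)
    case base
    show ?case using L by blast
  next
    case (step j')
    then obtain L1 where L1: "chain_leaves n x L1 j'" "joined (spine, L) (spine, L1)"
      "inversions n x L1 \<subseteq> inversions n x L" "\<forall>i<n. j' \<le> L!i \<longrightarrow> L1!i = L!i"
      by auto
    have "j' < n - 4" using step.prems by simp
    obtain c where c: "c \<in> leaves_at L1 j'"
      and "\<forall>d\<in>leaves_at L1 j'. sort_key n x d \<le> sort_key n x c"
      and L2: "chain_leaves n x (L1[c := Suc j']) (Suc j')"
        "joined (spine, L1) (spine, L1[c := Suc j'])"
        "inversions n x (L1[c := Suc j']) = inversions n x L1 - {c} \<times> leaves_at L1 (Suc j')"
      by (rule move_up[OF L1(1) \<open>j' < n - 4\<close>])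
    have "\<forall>i<n. Suc j' \<le> L!i \<longrightarrow> L1[c := Suc j']!i = L!i"
    proof (intro allI impI)
      fix i assume "i < n" "Suc j' \<le> L!i"
      then have "L1!i = L!i" "i \<noteq> c" using L1(4) c by (auto simp: leaves_at_def)
      then show "L1[c := Suc j']!i = L!i" by simp
    qed
    moreover have "joined (spine, L) (spine, L1[c := Suc j'])"
      using L1(2) L2(2) by (rule rtrancl_trans)
    moreover have "inversions n x (L1[c := Suc j']) \<subseteq> inversions n x L"
      using L1(3) L2(3) by blast
    ultimately show ?case using L2(1) by blast
  qed
  then show thesis using that by blast
qed

lemma move_heavy_down:
  assumes L: "chain_leaves n x L k" and "j \<le> k"
  obtains L' where "chain_leaves n x L' j" "joined (spine, L) (spine, L')"
    and "inversions n x L' \<subseteq> inversions n x L" "\<forall>i<n. L!i \<le> j \<longrightarrow> L'!i = L!i"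
proof -
  have "\<exists>L'. chain_leaves n x L' j \<and> joined (spine, L) (spine, L') \<and>
      inversions n x L' \<subseteq> inversions n x L \<and> (\<forall>i<n. L!i \<le> j \<longrightarrow> L'!i = L!i)"
    using assms(2)
  proof (induction j rule: inc_induct)
    case base
    show ?case using L by blast
  next
    case (step j')
    then obtain L1 where L1: "chain_leaves n x L1 (Suc j')" "joined (spine, L) (spine, L1)"
      "inversions n x L1 \<subseteq> inversions n x L" "\<forall>i<n. L!i \<le> Suc j' \<longrightarrow> L1!i = L!i"
      by auto
    obtain a where a: "a \<in> leaves_at L1 (Suc j')"
      and "\<forall>d\<in>leaves_at L1 (Suc j'). sort_key n x a \<le> sort_key n x d"
      and L2: "chain_leaves n x (L1[a := j']) j'"
        "joined (spine, L1) (spine, L1[a := j'])"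
        "inversions n x (L1[a := j']) = inversions n x L1 - leaves_at L1 j' \<times> {a}"
      by (rule move_down[OF L1(1)])
    have "\<forall>i<n. L!i \<le> j' \<longrightarrow> L1[a := j']!i = L!i"
    proof (intro allI impI)
      fix i assume "i < n" "L!i \<le> j'"
      then have "L1!i = L!i" "i \<noteq> a" using L1(4) a by (auto simp: leaves_at_def)
      then show "L1[a := j']!i = L!i" by simp
    qed
    moreover have "joined (spine, L) (spine, L1[a := j'])"
      using L1(2) L2(2) by (rule rtrancl_trans)
    moreover have "inversions n x (L1[a := j']) \<subseteq> inversions n x L"
      using L1(3) L2(3) by blast
    ultimately show ?case using L2(1) by blast
  qed
  then show thesis using that by blast
qed


text \<open>An inversion between the neighbouring vertices j and j + 1 is resolved by first walking
  the four-valent vertex to j (resp. j + 1) without touching the leaves at j and j + 1, and then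
  moving the largest leaf at j up (resp. the smallest leaf at j + 1 down).\<close>

lemma resolve_inversion_up:
  assumes L: "chain_leaves n x L k" and j: "k \<le> j" "j < n - 4"
    and a: "a \<in> leaves_at L j" and b: "b \<in> leaves_at L (Suc j)"
    and ba: "sort_key n x b < sort_key n x a"
  obtains L' where "chain_leaves n x L' (Suc j)" "joined (spine, L) (spine, L')"
    and "inversions n x L' \<subset> inversions n x L"
proof -
  obtain L1 where L1: "chain_leaves n x L1 j" "joined (spine, L) (spine, L1)"
    "inversions n x L1 \<subseteq> inversions n x L" "\<forall>i<n. j \<le> L!i \<longrightarrow> L1!i = L!i"
    by (rule move_heavy_up[OF L j(1) less_imp_le[OF j(2)]])
  have len1: "length L1 = n" using chain_leavesD(1)[OF L1(1)] .
  have a1: "a \<in> leaves_at L1 j" and b1: "b \<in> leaves_at L1 (Suc j)"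
    using a b L1(4) chain_leavesD(1)[OF L] len1 by (auto simp: leaves_at_def)
  obtain c where c: "c \<in> leaves_at L1 j" "\<forall>d\<in>leaves_at L1 j. sort_key n x d \<le> sort_key n x c"
    and L2: "chain_leaves n x (L1[c := Suc j]) (Suc j)" "joined (spine, L1) (spine, L1[c := Suc j])"
      "inversions n x (L1[c := Suc j]) = inversions n x L1 - {c} \<times> leaves_at L1 (Suc j)"
    by (rule move_up[OF L1(1) j(2)])
  have "sort_key n x b < sort_key n x c" using ba bspec[OF c(2) a1] by simp
  then have "(c, b) \<in> inversions n x L1"
    using c(1) b1 len1 by (simp add: leaves_at_def inversions_def)
  then have fewer: "inversions n x (L1[c := Suc j]) \<subset> inversions n x L"
    using L1(3) L2(3) b1 by blast
  have "joined (spine, L) (spine, L1[c := Suc j])"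
    using L1(2) L2(2) by (rule rtrancl_trans)
  then show thesis by (rule that[OF L2(1) _ fewer])
qed

lemma resolve_inversion_down:
  assumes L: "chain_leaves n x L k" and j: "j < k"
    and a: "a \<in> leaves_at L j" and b: "b \<in> leaves_at L (Suc j)"
    and ba: "sort_key n x b < sort_key n x a"
  obtains L' where "chain_leaves n x L' j" "joined (spine, L) (spine, L')"
    and "inversions n x L' \<subset> inversions n x L"
proof -
  obtain L1 where L1: "chain_leaves n x L1 (Suc j)" "joined (spine, L) (spine, L1)"
    "inversions n x L1 \<subseteq> inversions n x L" "\<forall>i<n. L!i \<le> Suc j \<longrightarrow> L1!i = L!i"
    by (rule move_heavy_down[OF L Suc_leI[OF j]])
  have len1: "length L1 = n" using chain_leavesD(1)[OF L1(1)] .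
  have a1: "a \<in> leaves_at L1 j" and b1: "b \<in> leaves_at L1 (Suc j)"
    using a b L1(4) chain_leavesD(1)[OF L] len1 by (auto simp: leaves_at_def)
  obtain a' where a': "a' \<in> leaves_at L1 (Suc j)"
      "\<forall>d\<in>leaves_at L1 (Suc j). sort_key n x a' \<le> sort_key n x d"
    and L2: "chain_leaves n x (L1[a' := j]) j" "joined (spine, L1) (spine, L1[a' := j])"
      "inversions n x (L1[a' := j]) = inversions n x L1 - leaves_at L1 j \<times> {a'}"
    by (rule move_down[OF L1(1)])
  have "sort_key n x a' < sort_key n x a" using ba bspec[OF a'(2) b1] by simp
  then have "(a, a') \<in> inversions n x L1"
    using a'(1) a1 len1 by (simp add: leaves_at_def inversions_def)
  then have fewer: "inversions n x (L1[a' := j]) \<subset> inversions n x L"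
    using L1(3) L2(3) a1 by blast
  have "joined (spine, L) (spine, L1[a' := j])"
    using L1(2) L2(2) by (rule rtrancl_trans)
  then show thesis by (rule that[OF L2(1) _ fewer])
qed

lemma fewer_inversions:
  assumes L: "chain_leaves n x L k" and inv: "inversions n x L \<noteq> {}"
  obtains L' k' where "chain_leaves n x L' k'" "joined (spine, L) (spine, L')"
    and "inversions n x L' \<subset> inversions n x L"
proof -
  obtain j a b where "j < n - 4" "a \<in> leaves_at L j" "b \<in> leaves_at L (Suc j)"
    "sort_key n x b < sort_key n x a"
    using adjacent_inversion[OF L inv] by blast
  note inversion = this
  show thesis
  proof (cases "k \<le> j")
    case True
    obtain L' where "chain_leaves n x L' (Suc j)" "joined (spine, L) (spine, L')"
      "inversions n x L' \<subset> inversions n x L"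
      using resolve_inversion_up[OF L True inversion] .
    then show thesis by (rule that)
  next
    case False
    then have "j < k" by simp
    obtain L' where "chain_leaves n x L' j" "joined (spine, L) (spine, L')"
      "inversions n x L' \<subset> inversions n x L"
      using resolve_inversion_down[OF L \<open>j < k\<close> inversion(2-4)] .
    then show thesis by (rule that)
  qed
qed

lemma joined_sorted:
  assumes "chain_leaves n x L k"
  obtains L' where "chain_leaves n x L' 0" "inversions n x L' = {}" "joined (spine, L) (spine, L')"
proof -
  have "\<exists>L'. chain_leaves n x L' 0 \<and> inversions n x L' = {} \<and> joined (spine, L) (spine, L')"
    using assms
  proof (induction "card (inversions n x L)" arbitrary: L k rule: less_induct)
    case less
    show ?case
    proof (cases "inversions n x L = {}")
      case True
      obtain L' where "chain_leaves n x L' 0" "joined (spine, L) (spine, L')"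
        "inversions n x L' \<subseteq> inversions n x L" "\<forall>i<n. L!i \<le> 0 \<longrightarrow> L'!i = L!i"
        by (rule move_heavy_down[OF less.prems, of 0]) simp
      then show ?thesis using True by blast
    next
      case False
      obtain L1 k1 where L1: "chain_leaves n x L1 k1" "joined (spine, L) (spine, L1)"
        "inversions n x L1 \<subset> inversions n x L"
        by (rule fewer_inversions[OF less.prems False])
      have "card (inversions n x L1) < card (inversions n x L)"
        using finite_inversions L1(3) by (rule psubset_card_mono)
      then obtain L' where L': "chain_leaves n x L' 0" "inversions n x L' = {}"
        "joined (spine, L1) (spine, L')"
        using less.hyps L1(1) by blast
      have "joined (spine, L) (spine, L')" using L1(2) L'(3) by (rule rtrancl_trans)
      then show ?thesis using L' by blast
    qed
  qed
  then show thesis using that by blast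
qed

lemma chain_cover_spine:
  assumes "chain_cover n x C"
  obtains L k where "C = (spine, L)" "chain_leaves n x L k"
proof -
  obtain E L where C: "C = (E, L)" by (cases C)
  have nt: "ntype n {..<n - 3} (E, L)"
    and val: "\<exists>u<n - 3. val (E, L) u = 4 \<and> (\<forall>w<n - 3. w \<noteq> u \<longrightarrow> val (E, L) w = 3)"
    and fl: "\<forall>a b. {a, b} \<in> E \<and> a < b \<longrightarrow> flow x (E, L) a b > 0"
    using assms unfolding C chain_cover_def vertex_type_cover_def fst_conv by blast+
  have len: "length L = n" and L_bound: "\<forall>i<n. L!i < n - 3"
    using nt unfolding ntype_def by auto
  have E: "E = spine" using chain_cover_edges assms C by blast
  obtain k where k: "k < n - 3" "val (E, L) k = 4" "\<forall>w<n - 3. w \<noteq> k \<longrightarrow> val (E, L) w = 3"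
    using val by blast
  have "chain_leaves n x L k"
    unfolding chain_leaves_def
  proof (intro conjI allI impI)
    fix j assume j: "j \<le> n - 4"
    have "val (E, L) j = path_degree (n - 4) j + card (leaves_at L j)"
      using card_path_edges_at[of "\<lambda>i. i" "n - 4" j] j by (simp add: val_def E leaves_at_def)
    then show "path_degree (n - 4) j + card (leaves_at L j) = (if j = k then 4 else 3)"
      using k j by auto
  next
    fix j assume j: "1 \<le> j \<and> j \<le> n - 4"
    then have "{j - 1, Suc (j - 1)} \<in> E" using E by (auto simp: path_edges_def)
    then have "0 < flow x (spine, L) (j - 1) (Suc (j - 1))" using fl E j by auto
    moreover have "flow x (spine, L) (j - 1) (Suc (j - 1)) =
        (\<Sum>l | l < length L \<and> j - 1 < L!l. x l)"
      using j len L_bound sum_x_zero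
      by (intro flow_path_edges(1)[of "\<lambda>i. i" "n - 4" "j - 1" L "nth L" x]) (auto simp: less_Suc_eq_le)
    moreover have "{l. l < length L \<and> j - 1 < L!l} = {l. l < length L \<and> j \<le> L!l}"
      using j by auto
    ultimately show "0 < upper_sum x L j" by (simp add: upper_sum_def)
  qed (use len L_bound k in auto)
  then show thesis using that C E by blast
qed

end

theorem lemma3p5:
  fixes n :: nat and x :: "nat \<Rightarrow> int" and p :: "nat \<Rightarrow> real"
  assumes "n \<ge> 5"
    and "in_Hn n x"
    and "\<forall>i j. i < j \<and> j \<le> n - 4 \<longrightarrow> p i < p j"
    and "chain_cover n x C" and "chain_cover n x C'"
  shows "(C, C') \<in> (hur_edge n x p \<union> (hur_edge n x p)\<inverse>)\<^sup>*"
proof -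
  interpret hurwitz_setting n x p
    using assms(1-3) unfolding in_Hn_def by unfold_locales auto
  obtain L k where C: "C = (spine, L)" "chain_leaves n x L k"
    by (rule chain_cover_spine[OF assms(4)])
  obtain L' k' where C': "C' = (spine, L')" "chain_leaves n x L' k'"
    by (rule chain_cover_spine[OF assms(5)])
  obtain S where S: "chain_leaves n x S 0" "inversions n x S = {}" "joined (spine, L) (spine, S)"
    by (rule joined_sorted[OF C(2)])
  obtain S' where S': "chain_leaves n x S' 0" "inversions n x S' = {}" "joined (spine, L') (spine, S')"
    by (rule joined_sorted[OF C'(2)])
  have "S = S'" by (rule sorted_chain_leaves_unique[OF S(1) S'(1) S(2) S'(2)])
  then have "joined (spine, S) (spine, L')" using joined_sym[OF S'(3)] by simp
  with S(3) show ?thesis unfolding C C' by (rule rtrancl_trans)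
qed

end
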